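(* Let $p$ be an idempotent in $(\beta\mathbb{N}, +)$, let $\langle C_n \rangle_{n=1}^\infty$ be a sequence of members of $p$, and let $\langle a_n \rangle_{n=1}^\infty$ be a sequence in $\mathbb{N}$. Then for each $n \in \mathbb{N}$ there exists a finite sequence $Y_n = \langle y_{n,j}\rangle_{j=1}^{a_n}$ in $\mathbb{N}$ of length $a_n$ with $\mathrm{FS}(Y_n) \subseteq C_n$, such that for every nonempty finite $F \subseteq \mathbb{N}$, $\sum_{n \in F} Y_n \subseteq C_{\min F}$.
   Context: $\beta\mathbb{N}$ is the set of ultrafilters on $\mathbb{N}$ with the extension of addition $p+q = \{A \subseteq \mathbb{N} : \{x : -x+A \in q\} \in p\}$, $-x+A=\{y: x+y\in A\}$; $p$ is idempotent if $p+p=p$. For a finite sequence $\langle x_n\rangle_{n=1}^k$, $\mathrm{FS}(\langle x_n\rangle_{n=1}^k) = \{\sum_{n\in H} x_n : \emptyset\neq H\subseteq\{1,\ldots,k\}\}$. For finite $F \subseteq \mathbb{N}$ and sequences $Y_n$, $\sum_{n \in F} Y_n = \{\sum_{n \in F} a_n : a_n \text{ is a term of } Y_n \text{ for each } n \in F\}$. *)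

theory Defs
  imports Main
begin

text \<open>The paper's N is the positive integers; we model it as the set PN of positive nats.\<close>
definition PN :: "nat set" where "PN = {n. 0 < n}"

definition ultrafilter_N :: "nat set set \<Rightarrow> bool" where
  "ultrafilter_N p \<longleftrightarrow>
     (\<forall>A\<in>p. A \<subseteq> PN) \<and> PN \<in> p \<and> {} \<notin> p \<and>
     (\<forall>A B. A \<in> p \<and> B \<in> p \<longrightarrow> A \<inter> B \<in> p) \<and>
     (\<forall>A B. A \<in> p \<and> A \<subseteq> B \<and> B \<subseteq> PN \<longrightarrow> B \<in> p) \<and>
     (\<forall>A. A \<subseteq> PN \<longrightarrow> A \<in> p \<or> PN - A \<in> p)"

definition shiftN :: "nat \<Rightarrow> nat set \<Rightarrow> nat set" where
  "shiftN x A = {y \<in> PN. x + y \<in> A}"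

definition uplus :: "nat set set \<Rightarrow> nat set set \<Rightarrow> nat set set" where
  "uplus p q = {A. A \<subseteq> PN \<and> {x \<in> PN. shiftN x A \<in> q} \<in> p}"

definition idempotent_N :: "nat set set \<Rightarrow> bool" where
  "idempotent_N p \<longleftrightarrow> ultrafilter_N p \<and> uplus p p = p"

definition FS_fin :: "(nat \<Rightarrow> nat) \<Rightarrow> nat \<Rightarrow> nat set" where
  "FS_fin y k = {(\<Sum>j\<in>H. y j) | H. H \<noteq> {} \<and> H \<subseteq> {1..k}}"

definition seq_sumset :: "nat set \<Rightarrow> (nat \<Rightarrow> nat) \<Rightarrow> (nat \<Rightarrow> nat \<Rightarrow> nat) \<Rightarrow> nat set" where
  "seq_sumset F a y = {(\<Sum>n\<in>F. y n (g n)) | g. \<forall>n\<in>F. g n \<in> {1..a n}}"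

end

theory Submission
  imports Defs
begin

(* For a member A of an idempotent p the set
   A* = {x in A. -x+A in p} is again in p, and -x+A* is in p for every x in A*.
   Given a decreasing sequence A_0, A_1, ... in p, choose z_n in A_n* and in
   -s+A_m* for every earlier finite sum s whose least index is m: this is a finite
   intersection of members of p, hence nonempty, and it keeps every finite sum of
   the z's inside A* of its least index. Applied to A_i = C_1 \<inter> ... \<inter> C_(i+1),
   the sequences Y_n are consecutive blocks of length a_n of z; the block of Y_n
   starts at an index \<ge> n - 1, so its sums lie in C_n. *)

lemma ultrafilter_N_Int: "ultrafilter_N p \<Longrightarrow> A \<in> p \<Longrightarrow> B \<in> p \<Longrightarrow> A \<inter> B \<in> p"
  unfolding ultrafilter_N_def by (elim conjE) blast

lemma ultrafilter_N_subset_PN: "ultrafilter_N p \<Longrightarrow> A \<in> p \<Longrightarrow> A \<subseteq> PN"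
  unfolding ultrafilter_N_def by (elim conjE) blast

lemma ultrafilter_N_PN: "ultrafilter_N p \<Longrightarrow> PN \<in> p"
  unfolding ultrafilter_N_def by (elim conjE)

lemma ultrafilter_N_nonempty: "ultrafilter_N p \<Longrightarrow> A \<in> p \<Longrightarrow> A \<noteq> {}"
  unfolding ultrafilter_N_def by (elim conjE) blast

lemma ultrafilter_N_Int_INT:
  assumes "ultrafilter_N p" "finite S" "B \<in> p" "\<forall>s\<in>S. f s \<in> p"
  shows "B \<inter> (\<Inter>s\<in>S. f s) \<in> p"
  using assms(2,4)
proof (induction S rule: finite_induct)
  case empty
  then show ?case using assms(3) by simp
next
  case (insert s S)
  have "B \<inter> (\<Inter>t\<in>insert s S. f t) = (B \<inter> (\<Inter>t\<in>S. f t)) \<inter> f s" by auto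
  then show ?case using insert ultrafilter_N_Int[OF assms(1)] by simp
qed

lemma idempotent_N_ultrafilter_N: "idempotent_N p \<Longrightarrow> ultrafilter_N p"
  by (simp add: idempotent_N_def)

lemma shiftN_shiftN: "shiftN y (shiftN x A) = shiftN (x + y) A"
  unfolding shiftN_def PN_def by (auto simp: add.assoc)

definition star_set :: "nat set set \<Rightarrow> nat set \<Rightarrow> nat set" where
  "star_set p A = {x \<in> A. shiftN x A \<in> p}"

lemma star_set_subset: "star_set p A \<subseteq> A"
  unfolding star_set_def by auto

lemma star_set_mem:
  assumes "idempotent_N p" "A \<in> p"
  shows "star_set p A \<in> p"
proof -
  have uf: "ultrafilter_N p" using assms(1) by (rule idempotent_N_ultrafilter_N)
  have "A \<in> uplus p p" using assms by (simp add: idempotent_N_def)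
  then have "{x \<in> PN. shiftN x A \<in> p} \<in> p" unfolding uplus_def by blast
  then have "{x \<in> PN. shiftN x A \<in> p} \<inter> A \<in> p" using ultrafilter_N_Int[OF uf] assms(2) by blast
  moreover have "{x \<in> PN. shiftN x A \<in> p} \<inter> A = star_set p A"
    using ultrafilter_N_subset_PN[OF uf assms(2)] unfolding star_set_def by auto
  ultimately show ?thesis by simp
qed

lemma shiftN_star_set_mem:
  assumes "idempotent_N p" "A \<in> p" "x \<in> star_set p A"
  shows "shiftN x (star_set p A) \<in> p"
proof -
  have "shiftN x (star_set p A) = star_set p (shiftN x A)"
    unfolding star_set_def using shiftN_shiftN[of _ x A] by (auto simp: shiftN_def)
  moreover have "shiftN x A \<in> p" using assms(3) star_set_def by blast
  ultimately show ?thesis using star_set_mem[OF assms(1)] by simp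
qed

definition next_terms :: "nat set set \<Rightarrow> (nat \<Rightarrow> nat set) \<Rightarrow> nat list \<Rightarrow> nat set" where
  "next_terms p A zs = star_set p (A (length zs)) \<inter>
     (\<Inter>H\<in>{H. H \<noteq> {} \<and> H \<subseteq> {..<length zs}}. shiftN (\<Sum>i\<in>H. zs ! i) (star_set p (A (Min H))))"

primrec star_seq_prefix :: "nat set set \<Rightarrow> (nat \<Rightarrow> nat set) \<Rightarrow> nat \<Rightarrow> nat list" where
  "star_seq_prefix p A 0 = []"
| "star_seq_prefix p A (Suc n) =
     star_seq_prefix p A n @ [SOME x. x \<in> next_terms p A (star_seq_prefix p A n)]"

definition star_seq :: "nat set set \<Rightarrow> (nat \<Rightarrow> nat set) \<Rightarrow> nat \<Rightarrow> nat" where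
  "star_seq p A n = star_seq_prefix p A (Suc n) ! n"

lemma length_star_seq_prefix: "length (star_seq_prefix p A n) = n"
  by (induction n) auto

lemma nth_star_seq_prefix: "i < n \<Longrightarrow> star_seq_prefix p A n ! i = star_seq p A i"
proof (induction n)
  case 0
  then show ?case by simp
next
  case (Suc n)
  then show ?case
    by (auto simp: nth_append length_star_seq_prefix star_seq_def less_Suc_eq)
qed

lemma star_seq_eq_some: "star_seq p A n = (SOME x. x \<in> next_terms p A (star_seq_prefix p A n))"
  by (simp add: star_seq_def nth_append length_star_seq_prefix)

lemma next_terms_star_seq_prefix:
  "next_terms p A (star_seq_prefix p A n) = star_set p (A n) \<inter>
     (\<Inter>H\<in>{H. H \<noteq> {} \<and> H \<subseteq> {..<n}}. shiftN (\<Sum>i\<in>H. star_seq p A i) (star_set p (A (Min H))))"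
proof -
  have "(\<Sum>i\<in>H. star_seq_prefix p A n ! i) = (\<Sum>i\<in>H. star_seq p A i)" if "H \<subseteq> {..<n}" for H
    using that by (intro sum.cong) (auto simp: nth_star_seq_prefix)
  then show ?thesis unfolding next_terms_def length_star_seq_prefix by auto
qed

lemma next_terms_mem:
  assumes "idempotent_N p" "\<forall>i. A i \<in> p"
    and sums: "\<forall>H. H \<noteq> {} \<and> H \<subseteq> {..<n} \<longrightarrow> (\<Sum>i\<in>H. star_seq p A i) \<in> star_set p (A (Min H))"
  shows "next_terms p A (star_seq_prefix p A n) \<in> p"
proof -
  let ?S = "{H. H \<noteq> {} \<and> H \<subseteq> {..<n}}"
  have "finite ?S" by (rule finite_subset[of _ "Pow {..<n}"]) auto
  moreover have "\<forall>H\<in>?S. shiftN (\<Sum>i\<in>H. star_seq p A i) (star_set p (A (Min H))) \<in> p"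
    using sums shiftN_star_set_mem[OF assms(1)] assms(2) by blast
  moreover have "star_set p (A n) \<in> p" using star_set_mem[OF assms(1)] assms(2) by blast
  ultimately show ?thesis
    unfolding next_terms_star_seq_prefix
    by (intro ultrafilter_N_Int_INT[OF idempotent_N_ultrafilter_N[OF assms(1)]])
qed

lemma star_seq_sums_in_star_set:
  assumes "idempotent_N p" "\<forall>i. A i \<in> p"
  shows "H \<noteq> {} \<Longrightarrow> H \<subseteq> {..<n} \<Longrightarrow> (\<Sum>i\<in>H. star_seq p A i) \<in> star_set p (A (Min H))"
proof (induction n arbitrary: H)
  case 0
  then show ?case by simp
next
  case (Suc n)
  let ?z = "star_seq p A"
  have "next_terms p A (star_seq_prefix p A n) \<in> p"
    using next_terms_mem[OF assms] Suc.IH by blast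
  then have z_next: "?z n \<in> next_terms p A (star_seq_prefix p A n)"
    unfolding star_seq_eq_some
    using ultrafilter_N_nonempty[OF idempotent_N_ultrafilter_N[OF assms(1)]]
    by (simp add: some_in_eq)
  consider "n \<notin> H" | "H = {n}" | "n \<in> H" "H - {n} \<noteq> {}" by blast
  then show ?case
  proof cases
    case 1
    then have "H \<subseteq> {..<n}" using Suc.prems by (auto simp: less_Suc_eq)
    then show ?thesis using Suc by simp
  next
    case 2
    then show ?thesis using z_next unfolding next_terms_star_seq_prefix by simp
  next
    case 3
    define H' where "H' = H - {n}"
    have H': "H' \<noteq> {}" "H' \<subseteq> {..<n}" "finite H'"
      using 3 Suc.prems unfolding H'_def by (auto simp: less_Suc_eq intro: finite_subset)
    have H_eq: "H = insert n H'" "n \<notin> H'" using 3 H'_def by auto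
    have "Min H' < n" using Min_in[OF H'(3,1)] H'(2) by auto
    then have min_eq: "Min H = Min H'" using H_eq H' by simp
    have "?z n \<in> shiftN (\<Sum>i\<in>H'. ?z i) (star_set p (A (Min H')))"
      using z_next H'(1,2) unfolding next_terms_star_seq_prefix by blast
    moreover have "(\<Sum>i\<in>H. ?z i) = (\<Sum>i\<in>H'. ?z i) + ?z n"
      using H_eq H'(3) by simp
    ultimately show ?thesis using min_eq unfolding shiftN_def by simp
  qed
qed

theorem idempotent_sums_in_decreasing_members:
  fixes A :: "nat \<Rightarrow> nat set"
  assumes "idempotent_N p" "\<forall>i. A i \<in> p" "\<And>i j. i \<le> j \<Longrightarrow> A j \<subseteq> A i"
  shows "\<exists>z. \<forall>H m. finite H \<and> H \<noteq> {} \<and> (\<forall>i\<in>H. m \<le> i) \<longrightarrow> (\<Sum>i\<in>H. z i) \<in> A m"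
proof (intro exI allI impI)
  fix H m assume H: "finite H \<and> H \<noteq> {} \<and> (\<forall>i\<in>H. (m::nat) \<le> i)"
  have "H \<subseteq> {..<Suc (Max H)}" using H by (auto simp: less_Suc_eq_le)
  then have "(\<Sum>i\<in>H. star_seq p A i) \<in> A (Min H)"
    using star_seq_sums_in_star_set[OF assms(1,2)] star_set_subset H by blast
  moreover have "A (Min H) \<subseteq> A m" using H assms(3) by simp
  ultimately show "(\<Sum>i\<in>H. star_seq p A i) \<in> A m" by blast
qed

definition block_start :: "(nat \<Rightarrow> nat) \<Rightarrow> nat \<Rightarrow> nat" where
  "block_start a n = (\<Sum>k\<in>{1..<n}. a k)"

lemma block_start_Suc: "1 \<le> n \<Longrightarrow> block_start a (Suc n) = block_start a n + a n"
  by (simp add: block_start_def sum.atLeastLessThan_Suc)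

lemma block_start_mono: "n \<le> m \<Longrightarrow> block_start a n \<le> block_start a m"
  unfolding block_start_def by (intro sum_mono2) auto

lemma block_end_le_block_start: "1 \<le> n \<Longrightarrow> n < m \<Longrightarrow> block_start a n + a n \<le> block_start a m"
  using block_start_Suc block_start_mono[of "Suc n" m a] by simp

lemma block_start_ge:
  assumes "\<forall>k\<in>PN. a k \<in> PN"
  shows "n - 1 \<le> block_start a n"
proof -
  have "(\<Sum>k\<in>{1..<n}. (1::nat)) \<le> (\<Sum>k\<in>{1..<n}. a k)"
    using assms by (intro sum_mono) (auto simp: PN_def Suc_le_eq)
  then show ?thesis by (simp add: block_start_def)
qed

lemma block_sums_in_members:
  fixes A :: "nat \<Rightarrow> nat set" and z a :: "nat \<Rightarrow> nat"
  assumes z: "\<forall>H m. finite H \<and> H \<noteq> {} \<and> (\<forall>i\<in>H. m \<le> i) \<longrightarrow> (\<Sum>i\<in>H. z i) \<in> A m"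
  defines "y \<equiv> \<lambda>n j. z (block_start a n + j - 1)"
  shows "FS_fin (y n) (a n) \<subseteq> A (block_start a n)"
    and "finite F \<Longrightarrow> F \<noteq> {} \<Longrightarrow> F \<subseteq> PN \<Longrightarrow> seq_sumset F a y \<subseteq> A (block_start a (Min F))"
proof -
  have reindex: "(\<Sum>i\<in>H. z (f i)) \<in> A m"
    if "finite H" "H \<noteq> {}" "inj_on f H" "\<forall>i\<in>H. m \<le> f i" for H f m
    using z[rule_format, of "f ` H" m] that by (simp add: sum.reindex)
  show "FS_fin (y n) (a n) \<subseteq> A (block_start a n)"
  proof
    fix x assume "x \<in> FS_fin (y n) (a n)"
    then obtain H where H: "H \<noteq> {}" "H \<subseteq> {1..a n}" and x: "x = (\<Sum>j\<in>H. y n j)"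
      unfolding FS_fin_def by blast
    have "inj_on (\<lambda>j. block_start a n + j - 1) H"
    proof (rule inj_onI)
      fix u v assume "u \<in> H" "v \<in> H" "block_start a n + u - 1 = block_start a n + v - 1"
      moreover have "1 \<le> u" "1 \<le> v" using H(2) \<open>u \<in> H\<close> \<open>v \<in> H\<close> by auto
      ultimately show "u = v" by linarith
    qed
    moreover have "finite H" using H(2) finite_subset by blast
    moreover have "\<forall>j\<in>H. block_start a n \<le> block_start a n + j - 1"
      using H(2) by (fastforce simp: subset_iff)
    ultimately show "x \<in> A (block_start a n)"
      unfolding x y_def using H(1) by (intro reindex)
  qed
  assume F: "finite F" "F \<noteq> {}" "F \<subseteq> PN"
  show "seq_sumset F a y \<subseteq> A (block_start a (Min F))"
  proof
    fix x assume "x \<in> seq_sumset F a y"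
    then obtain g where g: "\<forall>n\<in>F. g n \<in> {1..a n}" and x: "x = (\<Sum>n\<in>F. y n (g n))"
      unfolding seq_sumset_def by blast
    define idx where "idx k = block_start a k + g k - 1" for k
    have F_pos: "1 \<le> k" if "k \<in> F" for k using F(3) that by (auto simp: PN_def)
    have idx_less: "idx k < idx l" if "k \<in> F" "l \<in> F" "k < l" for k l
    proof -
      have "1 \<le> g k" "g k \<le> a k" "1 \<le> g l" using g that(1,2) by auto
      then show ?thesis
        using block_end_le_block_start[OF F_pos[OF that(1)] that(3), of a]
        unfolding idx_def by linarith
    qed
    have "inj_on idx F"
      by (rule inj_onI) (metis idx_less less_irrefl linorder_neqE_nat)
    moreover have "block_start a (Min F) \<le> idx k" if "k \<in> F" for k
      using block_start_mono[of "Min F" k a] g that F(1) unfolding idx_def by fastforce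
    ultimately show "x \<in> A (block_start a (Min F))"
      unfolding x y_def idx_def[symmetric] using F by (intro reindex) auto
  qed
qed

theorem theorem2p4:
  fixes p :: "nat set set" and C :: "nat \<Rightarrow> nat set" and a :: "nat \<Rightarrow> nat"
  assumes "idempotent_N p"
    and "\<forall>n\<in>PN. C n \<in> p"
    and "\<forall>n\<in>PN. a n \<in> PN"
  shows "\<exists>y :: nat \<Rightarrow> nat \<Rightarrow> nat.
           (\<forall>n\<in>PN. (\<forall>j\<in>{1..a n}. y n j \<in> PN) \<and> FS_fin (y n) (a n) \<subseteq> C n) \<and>
           (\<forall>F. finite F \<and> F \<noteq> {} \<and> F \<subseteq> PN \<longrightarrow> seq_sumset F a y \<subseteq> C (Min F))"
proof -
  define A where "A i = PN \<inter> (\<Inter>k\<in>{1..Suc i}. C k)" for i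
  have uf: "ultrafilter_N p" using assms(1) by (rule idempotent_N_ultrafilter_N)
  have "\<forall>k\<in>{1..Suc i}. C k \<in> p" for i using assms(2) by (auto simp: PN_def)
  then have "\<forall>i. A i \<in> p"
    unfolding A_def by (auto intro: ultrafilter_N_Int_INT[OF uf _ ultrafilter_N_PN[OF uf]])
  moreover have "A j \<subseteq> A i" if "i \<le> j" for i j using that unfolding A_def by auto
  ultimately obtain z where z: "\<forall>H m. finite H \<and> H \<noteq> {} \<and> (\<forall>i\<in>H. m \<le> i) \<longrightarrow> (\<Sum>i\<in>H. z i) \<in> A m"
    using idempotent_sums_in_decreasing_members[OF assms(1)] by blast
  have A_C: "A (block_start a n) \<subseteq> C n" if "n \<in> PN" for n
    using that block_start_ge[OF assms(3), of n] unfolding A_def PN_def by auto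
  define y where "y n j = z (block_start a n + j - 1)" for n j
  have FS: "FS_fin (y n) (a n) \<subseteq> A (block_start a n)" for n
    using block_sums_in_members(1)[OF z] unfolding y_def .
  have "y n j \<in> FS_fin (y n) (a n)" if "j \<in> {1..a n}" for n j
    using that unfolding FS_fin_def by (intro CollectI exI[of _ "{j}"]) auto
  moreover have "A i \<subseteq> PN" for i unfolding A_def by blast
  ultimately have "\<forall>n\<in>PN. (\<forall>j\<in>{1..a n}. y n j \<in> PN) \<and> FS_fin (y n) (a n) \<subseteq> C n"
    using FS A_C by blast
  moreover have "seq_sumset F a y \<subseteq> C (Min F)" if "finite F" "F \<noteq> {}" "F \<subseteq> PN" for F
    using block_sums_in_members(2)[OF z that] A_C[of "Min F"] Min_in[OF that(1,2)] that(3)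
    unfolding y_def by blast
  ultimately show ?thesis by blast
qed

end
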